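(* In the semi-classical setting, for every $n\ge1$ the polynomial $y=p_n$ satisfies $$W\Theta_n\, y'' = \big(W\Theta_n' - W'\Theta_n - 2V\Theta_n\big)\,y' + K_n\, y,$$ where $$K_n = (\Omega_n - V)'\Theta_n - (\Omega_n-V)\Theta_n' + \frac{\Theta_n\big(\Omega_n^2 - V^2 - a_n^2\Theta_n\Theta_{n-1}\big)}{W},$$ and $K_n$ is a polynomial.
   Context: Let $(\mu_k)_{k\ge 0}$ be complex numbers such that all Hankel determinants $\det(\mu_{i+j})_{0\le i,j\le n}$ are nonzero; $\mathcal L(x^k)=\mu_k$; $p_n(z)=\gamma_n z^n+\cdots$ ($\gamma_n\ne0$) orthonormal: $\mathcal L(p_np_m)=\delta_{n,m}$; recurrence $a_{n+1}p_{n+1}(z)=(z-b_n)p_n(z)-a_np_{n-1}(z)$, $p_{-1}=0$, $a_n=\gamma_{n-1}/\gamma_n$. $f(z)=\sum_{k\ge0}\mu_k z^{-k-1}$ (formal series); $p^{(1)}_{n-1}$ is the polynomial part of $fp_n$ and $\varepsilon_n=fp_n-p^{(1)}_{n-1}$. Semi-classical: polynomials $W\not\equiv0,V,U$ with $Wf'=2Vf+U$. For $n\ge0$, $\Theta_n = W(\varepsilon_n p_n' - \varepsilon_n' p_n) + 2V\varepsilon_n p_n$, and for $n\ge1$, $\Omega_n = a_n W(\varepsilon_{n-1}p_n' - \varepsilon_n' p_{n-1}) + a_n V(\varepsilon_{n-1}p_n + \varepsilon_n p_{n-1})$; these are polynomials in $z$. Primes denote $d/dz$. *)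

theory Defs
  imports "HOL-Computational_Algebra.Formal_Laurent_Series" "Jordan_Normal_Form.Determinant"
begin

text \<open>Encoding: formal Laurent series in z^{-1} are represented as formal Laurent series
  (type fls) in the variable w = 1/z, i.e. z corresponds to fls_X_inv.\<close>

definition zpoly :: "complex poly \<Rightarrow> complex fls" where
  "zpoly P = poly (map_poly fls_const P) fls_X_inv"

text \<open>d/dz = - w^2 d/dw\<close>
definition Dz :: "complex fls \<Rightarrow> complex fls" where
  "Dz g = - (fls_X ^ 2 * fls_deriv g)"

text \<open>polynomial part in z (all terms z^k, k \<ge> 0)\<close>
definition zpolypart :: "complex fls \<Rightarrow> complex poly" where
  "zpolypart g = fls_prpart g + [: fls_nth g 0 :]"

text \<open>f(z) = sum_k mu_k z^{-k-1}\<close>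
definition fseries :: "(nat \<Rightarrow> complex) \<Rightarrow> complex fls" where
  "fseries \<mu> = fls_X * fps_to_fls (Abs_fps \<mu>)"

definition Lfun :: "(nat \<Rightarrow> complex) \<Rightarrow> complex poly \<Rightarrow> complex" where
  "Lfun \<mu> P = (\<Sum>k\<le>degree P. coeff P k * \<mu> k)"

definition hankel_det :: "(nat \<Rightarrow> complex) \<Rightarrow> nat \<Rightarrow> complex" where
  "hankel_det \<mu> n = det (mat (Suc n) (Suc n) (\<lambda>(i, j). \<mu> (i + j)))"

definition eps :: "(nat \<Rightarrow> complex) \<Rightarrow> (nat \<Rightarrow> complex poly) \<Rightarrow> nat \<Rightarrow> complex fls" where
  "eps \<mu> p n = fseries \<mu> * zpoly (p n) - zpoly (zpolypart (fseries \<mu> * zpoly (p n)))"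

definition acoef :: "(nat \<Rightarrow> complex poly) \<Rightarrow> nat \<Rightarrow> complex" where
  "acoef p n = lead_coeff (p (n - 1)) / lead_coeff (p n)"

definition Theta :: "(nat \<Rightarrow> complex) \<Rightarrow> (nat \<Rightarrow> complex poly) \<Rightarrow> complex poly \<Rightarrow> complex poly
    \<Rightarrow> nat \<Rightarrow> complex fls" where
  "Theta \<mu> p W V n =
     zpoly W * (eps \<mu> p n * Dz (zpoly (p n)) - Dz (eps \<mu> p n) * zpoly (p n))
     + 2 * zpoly V * eps \<mu> p n * zpoly (p n)"

definition Omega :: "(nat \<Rightarrow> complex) \<Rightarrow> (nat \<Rightarrow> complex poly) \<Rightarrow> complex poly \<Rightarrow> complex poly
    \<Rightarrow> nat \<Rightarrow> complex fls" where
  "Omega \<mu> p W V n =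
     fls_const (acoef p n) * zpoly W *
        (eps \<mu> p (n - 1) * Dz (zpoly (p n)) - Dz (eps \<mu> p n) * zpoly (p (n - 1)))
     + fls_const (acoef p n) * zpoly V *
        (eps \<mu> p (n - 1) * zpoly (p n) + eps \<mu> p n * zpoly (p (n - 1)))"

definition Kcoef :: "(nat \<Rightarrow> complex) \<Rightarrow> (nat \<Rightarrow> complex poly) \<Rightarrow> complex poly \<Rightarrow> complex poly
    \<Rightarrow> nat \<Rightarrow> complex fls" where
  "Kcoef \<mu> p W V n =
     (let \<Theta> = Theta \<mu> p W V n; \<Omega> = Omega \<mu> p W V n; Vz = zpoly V;
          a = fls_const (acoef p n) in
      Dz (\<Omega> - Vz) * \<Theta> - (\<Omega> - Vz) * Dz \<Theta>
      + \<Theta> * (\<Omega> ^ 2 - Vz ^ 2 - a ^ 2 * \<Theta> * Theta \<mu> p W V (n - 1)) / zpoly W)"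

end

theory Submission
  imports Defs
begin

(* Write \<epsilon>_m = f p_m - q_m, where q_m is the polynomial part of f p_m. Orthogonality makes
   \<epsilon>_m = O(z^(-m-1)) with leading coefficient 1/\<gamma>_m, so the Casorati determinant
   \<epsilon>_(n-1) p_n - \<epsilon>_n p_(n-1) is the constant 1/a_n. With this identity the definitions of
   \<Theta>_n and \<Omega>_n become the ladder relations
     W p_n' = (\<Omega>_n - V) p_n - a_n \<Theta>_n p_(n-1),   W p_(n-1)' = a_n \<Theta>_(n-1) p_n - (\<Omega>_n + V) p_(n-1),
   and eliminating p_(n-1) gives the differential equation; none of this uses the
   semi-classical relation. That relation W f' = 2 V f + U removes f from \<Theta>_n and \<Omega>_n, so
   they are polynomials, and the Casorati identity read modulo W shows that W divides
   \<Omega>_n^2 - V^2 - a_n^2 \<Theta>_n \<Theta>_(n-1), so K_n is a polynomial too. *)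

lemma zpoly_pCons: "zpoly (pCons c P) = fls_const c + fls_X_inv * zpoly P"
  by (simp add: zpoly_def map_poly_pCons)

lemma zpoly_0 [simp]: "zpoly 0 = 0"
  by (simp add: zpoly_def)

lemma zpoly_const [simp]: "zpoly [:c:] = fls_const c"
  by (simp add: zpoly_pCons)

lemma zpoly_1 [simp]: "zpoly 1 = 1"
  by (simp add: one_pCons zpoly_pCons del: pCons_one)

lemma zpoly_add [simp]: "zpoly (P + Q) = zpoly P + zpoly Q"
proof (induction P arbitrary: Q)
  case (pCons a P)
  obtain b Q' where "Q = pCons b Q'"
    by (cases Q) auto
  then show ?case
    using pCons.IH[of Q'] by (simp add: zpoly_pCons algebra_simps fls_plus_const[symmetric])
qed simp

lemma zpoly_minus [simp]: "zpoly (- P) = - zpoly P"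
  by (induction P) (simp_all add: zpoly_pCons algebra_simps)

lemma zpoly_diff [simp]: "zpoly (P - Q) = zpoly P - zpoly Q"
  using zpoly_add[of P "- Q"] by simp

lemma zpoly_smult [simp]: "zpoly (Polynomial.smult c P) = fls_const c * zpoly P"
  by (induction P) (simp_all add: zpoly_pCons algebra_simps)

lemma zpoly_mult [simp]: "zpoly (P * Q) = zpoly P * zpoly Q"
  by (induction P) (simp_all add: zpoly_pCons algebra_simps)

lemma zpoly_power [simp]: "zpoly (P ^ k) = zpoly P ^ k"
  by (induction k) simp_all

lemma zpoly_numeral [simp]: "zpoly (numeral k) = numeral k"
  by (simp add: numeral_poly)

lemma zpoly_nth: "fls_nth (zpoly P) k = (if k \<le> 0 then coeff P (nat (- k)) else 0)"
proof (induction P arbitrary: k)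
  case (pCons a P)
  have shift: "fls_nth (zpoly (pCons a P)) k = (if k = 0 then a else 0) + fls_nth (zpoly P) (k + 1)"
    by (simp add: zpoly_pCons fls_X_inv_times_conv_shift)
  consider "k = 0" | "k > 0" | "k < 0"
    by linarith
  then show ?case
  proof cases
    case 3
    then have "nat (- k) = Suc (nat (- (k + 1)))"
      by simp
    then show ?thesis
      using 3 by (simp add: shift pCons.IH)
  qed (use shift in \<open>simp_all add: pCons.IH\<close>)
qed simp

lemma zpoly_eq_iff [simp]: "zpoly P = zpoly Q \<longleftrightarrow> P = Q"
proof
  assume "zpoly P = zpoly Q"
  then have "fls_nth (zpoly P) (- int j) = fls_nth (zpoly Q) (- int j)" for j
    by simp
  then show "P = Q"
    by (simp add: zpoly_nth poly_eq_iff)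
qed simp

lemma zpoly_eq_0_iff [simp]: "zpoly P = 0 \<longleftrightarrow> P = 0"
  using zpoly_eq_iff[of P 0] by simp

lemma zpoly_monom: "zpoly (monom c i) = fls_const c * fls_X_inv ^ i"
  by (induction i) (simp_all add: monom_0 monom_Suc zpoly_pCons ac_simps)

lemma zpoly_sum: "zpoly (\<Sum>i\<in>A. f i) = (\<Sum>i\<in>A. zpoly (f i))"
  by (induction A rule: infinite_finite_induct) simp_all

lemma fls_nth_mult_zpoly:
  assumes "degree P \<le> N"
  shows "fls_nth (g * zpoly P) k = (\<Sum>i\<le>N. coeff P i * fls_nth g (k + int i))"
proof -
  have "g * zpoly P = (\<Sum>i\<le>N. fls_const (coeff P i) * (g * fls_X_inv ^ i))"
    by (subst poly_as_sum_of_monoms'[OF assms, symmetric])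
       (simp add: zpoly_sum zpoly_monom sum_distrib_left ac_simps)
  then show ?thesis
    by (simp add: fls_nth_sum fls_X_inv_power_times_conv_shift)
qed

lemma Dz_add [simp]: "Dz (f + g) = Dz f + Dz g"
  by (simp add: Dz_def algebra_simps)

lemma Dz_diff [simp]: "Dz (f - g) = Dz f - Dz g"
  by (simp add: Dz_def algebra_simps)

lemma Dz_mult [simp]: "Dz (f * g) = Dz f * g + f * Dz g"
  by (simp add: Dz_def algebra_simps)

lemma Dz_0 [simp]: "Dz 0 = 0"
  by (simp add: Dz_def)

lemma Dz_const [simp]: "Dz (fls_const c) = 0"
  by (simp add: Dz_def)

lemma Dz_1 [simp]: "Dz 1 = 0"
  by (simp add: Dz_def)

lemma Dz_X_inv: "Dz fls_X_inv = 1"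
proof -
  have "fls_X * fls_X_inv = (1 :: complex fls)"
    by (simp flip: fls_inverse_X)
  then show ?thesis
    by (simp add: Dz_def power2_eq_square) (metis mult.assoc mult.commute mult.left_neutral)
qed

lemma Dz_zpoly [simp]: "Dz (zpoly P) = zpoly (pderiv P)"
  by (induction P) (simp_all add: zpoly_pCons pderiv_pCons Dz_X_inv algebra_simps)

lemma Dz_ode_elimination:
  fixes W V P P1 \<Theta> \<Theta>1 \<Omega> a :: "complex fls"
  assumes W_nonzero: "W \<noteq> 0" and a_const: "Dz a = 0"
    and lowering: "W * Dz P = (\<Omega> - V) * P - a * \<Theta> * P1"
    and raising: "W * Dz P1 = a * \<Theta>1 * P - (\<Omega> + V) * P1"
  shows "W * \<Theta> * Dz (Dz P) = (W * Dz \<Theta> - Dz W * \<Theta> - 2 * V * \<Theta>) * Dz P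
           + (Dz (\<Omega> - V) * \<Theta> - (\<Omega> - V) * Dz \<Theta> + \<Theta> * (\<Omega>\<^sup>2 - V\<^sup>2 - a\<^sup>2 * \<Theta> * \<Theta>1) / W) * P"
    (is "?lhs = ?rhs")
proof -
  define B where "B = \<Omega>\<^sup>2 - V\<^sup>2 - a\<^sup>2 * \<Theta> * \<Theta>1"
  define K0 where "K0 = \<Theta> * B / W"
  have K0: "W * K0 = \<Theta> * B"
    using W_nonzero by (simp add: K0_def)
  have lowering_deriv: "Dz W * Dz P + W * Dz (Dz P)
      = Dz (\<Omega> - V) * P + (\<Omega> - V) * Dz P - a * Dz \<Theta> * P1 - a * \<Theta> * Dz P1"
    using arg_cong[where f = Dz, OF lowering] a_const by (simp add: algebra_simps)
  (* W times the defect of the claim is a combination of the defects of the three relations. *)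
  have "W * (?lhs - ?rhs)
      = W * \<Theta> * (Dz W * Dz P + W * Dz (Dz P)
                   - (Dz (\<Omega> - V) * P + (\<Omega> - V) * Dz P - a * Dz \<Theta> * P1 - a * \<Theta> * Dz P1))
        - a * \<Theta>\<^sup>2 * (W * Dz P1 - (a * \<Theta>1 * P - (\<Omega> + V) * P1))
        + (\<Theta> * (\<Omega> + V) - W * Dz \<Theta>) * (W * Dz P - ((\<Omega> - V) * P - a * \<Theta> * P1))
        + P * (\<Theta> * B - W * K0)"
    unfolding K0_def[symmetric] B_def[symmetric] by (simp add: B_def algebra_simps power2_eq_square)
  then show ?thesis
    using lowering lowering_deriv raising K0 W_nonzero by simp
qed

lemma Lfun_conv_sum: "degree P \<le> N \<Longrightarrow> Lfun \<mu> P = (\<Sum>k\<le>N. coeff P k * \<mu> k)"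
  unfolding Lfun_def by (rule sum.mono_neutral_left) (auto simp: coeff_eq_0)

lemma Lfun_0 [simp]: "Lfun \<mu> 0 = 0"
  by (simp add: Lfun_def)

lemma Lfun_add: "Lfun \<mu> (P + Q) = Lfun \<mu> P + Lfun \<mu> Q"
proof -
  define N where "N = max (degree P) (degree Q)"
  have "degree (P + Q) \<le> N"
    unfolding N_def by (rule degree_add_le) auto
  then show ?thesis
    using Lfun_conv_sum[of P N \<mu>] Lfun_conv_sum[of Q N \<mu>] Lfun_conv_sum[of "P + Q" N \<mu>]
    by (simp add: N_def algebra_simps sum.distrib)
qed

lemma Lfun_smult: "Lfun \<mu> (Polynomial.smult c P) = c * Lfun \<mu> P"
  using Lfun_conv_sum[of "Polynomial.smult c P" "degree P" \<mu>]
  by (simp add: Lfun_def sum_distrib_left algebra_simps)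

lemma Lfun_sum: "Lfun \<mu> (\<Sum>i\<in>A. f i) = (\<Sum>i\<in>A. Lfun \<mu> (f i))"
  by (induction A rule: infinite_finite_induct) (simp_all add: Lfun_add Lfun_def[of _ 0])

lemma Lfun_monom: "Lfun \<mu> (monom c k) = c * \<mu> k"
  using Lfun_conv_sum[of "monom c k" k \<mu>] by (simp add: degree_monom_le coeff_monom if_distrib[of "\<lambda>x. x * _"] cong: if_cong)

lemma Lfun_monom_mult: "Lfun \<mu> (monom 1 j * P) = (\<Sum>i\<le>degree P. coeff P i * \<mu> (j + i))"
proof -
  have "monom 1 j * P = (\<Sum>i\<le>degree P. monom (coeff P i) (j + i))"
    by (subst poly_as_sum_of_monoms[symmetric]) (simp add: sum_distrib_left mult_monom)
  then show ?thesis
    by (simp add: Lfun_sum Lfun_monom)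
qed

lemma fls_nth_fseries: "fls_nth (fseries \<mu>) k = (if k \<ge> 1 then \<mu> (nat (k - 1)) else 0)"
  by (simp add: fseries_def fls_X_times_conv_shift)

lemma fls_nth_fseries_mult_zpoly:
  assumes "k \<ge> 1"
  shows "fls_nth (fseries \<mu> * zpoly P) k = Lfun \<mu> (monom 1 (nat (k - 1)) * P)"
  unfolding fls_nth_mult_zpoly[OF order_refl] Lfun_monom_mult
proof (rule sum.cong [OF refl])
  fix i
  have "nat (k + int i - 1) = nat (k - 1) + i"
    using assms by linarith
  then show "coeff P i * fls_nth (fseries \<mu>) (k + int i) = coeff P i * \<mu> (nat (k - 1) + i)"
    using assms by (simp add: fls_nth_fseries)
qed

lemma fls_nth_zpoly_zpolypart: "fls_nth (zpoly (zpolypart g)) k = (if k \<le> 0 then fls_nth g k else 0)"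
  by (auto simp: zpoly_nth zpolypart_def coeff_pCons split: nat.split)

locale orthonormal_polys =
  fixes \<mu> :: "nat \<Rightarrow> complex" and p :: "nat \<Rightarrow> complex poly"
  assumes degree_p: "degree (p m) = m"
    and lead_coeff_p: "lead_coeff (p m) \<noteq> 0"
    and orthonormal: "Lfun \<mu> (p m * p k) = (if m = k then 1 else 0)"
begin

definition q :: "nat \<Rightarrow> complex poly" where
  "q m = zpolypart (fseries \<mu> * zpoly (p m))"

lemma eps_conv: "eps \<mu> p m = fseries \<mu> * zpoly (p m) - zpoly (q m)"
  by (simp add: eps_def q_def)

lemma Lfun_orthogonal: "degree Q < m \<Longrightarrow> Lfun \<mu> (Q * p m) = 0"
proof (induction "degree Q" arbitrary: Q rule: less_induct)
  case less
  show ?case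
  proof (cases "Q = 0")
    case False
    define d where "d = degree Q"
    define c where "c = lead_coeff Q / lead_coeff (p d)"
    define R where "R = Q - Polynomial.smult c (p d)"
    have "degree R \<le> d"
      unfolding R_def d_def by (rule degree_diff_le) (simp_all add: degree_p)
    moreover have "coeff R d = 0"
      using lead_coeff_p[of d] by (simp add: R_def c_def d_def degree_p)
    ultimately have "R = 0 \<or> degree R < d"
      by (metis le_neq_implies_less leading_coeff_0_iff)
    then have "Lfun \<mu> (R * p m) = 0"
      using less by (auto simp: d_def)
    moreover have "Q = R + Polynomial.smult c (p d)"
      by (simp add: R_def)
    moreover have "d \<noteq> m"
      using less.prems by (simp add: d_def)
    ultimately show ?thesis
      using orthonormal[of d m] by (simp add: distrib_right Lfun_add Lfun_smult)
  qed simp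
qed

lemma Lfun_monom_mult_p: "Lfun \<mu> (monom 1 m * p m) = 1 / lead_coeff (p m)"
proof -
  define g where "g = lead_coeff (p m)"
  define R where "R = p m - monom g m"
  have "degree R \<le> m"
    unfolding R_def by (rule degree_diff_le) (simp_all add: degree_p degree_monom_le)
  moreover have "coeff R m = 0"
    by (simp add: R_def g_def degree_p)
  ultimately have "R = 0 \<or> degree R < m"
    by (metis le_neq_implies_less leading_coeff_0_iff)
  then have R: "Lfun \<mu> (R * p m) = 0"
    using Lfun_orthogonal by auto
  have "p m = Polynomial.smult g (monom 1 m) + R"
    by (simp add: R_def smult_monom)
  then have "1 = Lfun \<mu> ((Polynomial.smult g (monom 1 m) + R) * p m)"
    using orthonormal[of m m] by simp
  also have "\<dots> = g * Lfun \<mu> (monom 1 m * p m)"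
    by (simp add: distrib_right Lfun_add Lfun_smult R)
  finally show ?thesis
    using lead_coeff_p[of m] by (simp add: g_def field_simps)
qed

lemma fls_nth_eps: "fls_nth (eps \<mu> p m) k = (if k \<ge> 1 then Lfun \<mu> (monom 1 (nat (k - 1)) * p m) else 0)"
  by (simp add: eps_def fls_nth_zpoly_zpolypart fls_nth_fseries_mult_zpoly)

lemma fls_nth_eps_eq_0: "k \<le> int m \<Longrightarrow> fls_nth (eps \<mu> p m) k = 0"
  by (auto simp: fls_nth_eps degree_monom_eq intro!: Lfun_orthogonal)

lemma fls_nth_eps_lead: "fls_nth (eps \<mu> p m) (int m + 1) = 1 / lead_coeff (p m)"
  by (simp add: fls_nth_eps Lfun_monom_mult_p)

lemma fls_nth_eps_mult_zpoly:
  assumes "degree P \<le> Suc m" and "k \<le> 0"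
  shows "fls_nth (eps \<mu> p m * zpoly P) k = (if k = 0 then coeff P (Suc m) / lead_coeff (p m) else 0)"
proof -
  have "fls_nth (eps \<mu> p m * zpoly P) k
      = (\<Sum>i\<le>m. coeff P i * fls_nth (eps \<mu> p m) (k + int i))
        + coeff P (Suc m) * fls_nth (eps \<mu> p m) (k + int (Suc m))"
    unfolding fls_nth_mult_zpoly[OF assms(1)] sum.atMost_Suc ..
  also have "(\<Sum>i\<le>m. coeff P i * fls_nth (eps \<mu> p m) (k + int i)) = 0"
    using assms(2) by (intro sum.neutral ballI) (simp add: fls_nth_eps_eq_0)
  moreover have "fls_nth (eps \<mu> p m) (k + int (Suc m)) = (if k = 0 then 1 / lead_coeff (p m) else 0)"
    using assms(2) fls_nth_eps_lead[of m] by (auto simp: fls_nth_eps_eq_0 add.commute)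
  ultimately show ?thesis
    by simp
qed

lemma acoef_nonzero: "acoef p n \<noteq> 0"
  using lead_coeff_p[of n] lead_coeff_p[of "n - 1"] by (simp add: acoef_def)

lemma q_casorati:
  assumes "n \<ge> 1"
  shows "Polynomial.smult (acoef p n) (q n * p (n - 1) - q (n - 1) * p n) = 1"
proof -
  define D where "D = q n * p (n - 1) - q (n - 1) * p n"
  have zpoly_D: "zpoly D = eps \<mu> p (n - 1) * zpoly (p n) - eps \<mu> p n * zpoly (p (n - 1))"
    by (simp add: D_def eps_conv algebra_simps)
  have "coeff D j = fls_nth (zpoly D) (- int j)" for j
    by (simp add: zpoly_nth)
  then have "coeff D j = fls_nth (eps \<mu> p (n - 1) * zpoly (p n)) (- int j)
      - fls_nth (eps \<mu> p n * zpoly (p (n - 1))) (- int j)" for j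
    unfolding zpoly_D fls_minus_nth .
  then have "coeff D j = (if j = 0 then 1 / acoef p n else 0)" for j
    using assms lead_coeff_p[of n] by (simp add: fls_nth_eps_mult_zpoly degree_p coeff_eq_0 acoef_def)
  then have "D = [:1 / acoef p n:]"
    by (simp add: poly_eq_iff coeff_pCons split: nat.split)
  then show ?thesis
    by (simp add: D_def acoef_nonzero one_pCons)
qed

lemma eps_casorati:
  assumes "n \<ge> 1"
  shows "fls_const (acoef p n) * (eps \<mu> p (n - 1) * zpoly (p n) - eps \<mu> p n * zpoly (p (n - 1))) = 1"
proof -
  have "fls_const (acoef p n) * (eps \<mu> p (n - 1) * zpoly (p n) - eps \<mu> p n * zpoly (p (n - 1)))
      = zpoly (Polynomial.smult (acoef p n) (q n * p (n - 1) - q (n - 1) * p n))"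
    by (simp add: eps_conv algebra_simps)
  also have "\<dots> = 1"
    unfolding q_casorati[OF assms] by simp
  finally show ?thesis .
qed

lemma lowering_relation:
  assumes "n \<ge> 1"
  shows "zpoly W * Dz (zpoly (p n)) = (Omega \<mu> p W V n - zpoly V) * zpoly (p n)
           - fls_const (acoef p n) * Theta \<mu> p W V n * zpoly (p (n - 1))"
proof -
  have "zpoly W * Dz (zpoly (p n)) - ((Omega \<mu> p W V n - zpoly V) * zpoly (p n)
           - fls_const (acoef p n) * Theta \<mu> p W V n * zpoly (p (n - 1)))
      = (zpoly W * Dz (zpoly (p n)) + zpoly V * zpoly (p n)) * (1 - fls_const (acoef p n) *
           (eps \<mu> p (n - 1) * zpoly (p n) - eps \<mu> p n * zpoly (p (n - 1))))"
    by (simp add: Theta_def Omega_def algebra_simps)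
  then show ?thesis
    unfolding eps_casorati[OF assms] by simp
qed

lemma raising_relation:
  assumes "n \<ge> 1"
  shows "zpoly W * Dz (zpoly (p (n - 1))) = fls_const (acoef p n) * Theta \<mu> p W V (n - 1) * zpoly (p n)
           - (Omega \<mu> p W V n + zpoly V) * zpoly (p (n - 1))"
proof -
  define C where "C = fls_const (acoef p n) * (eps \<mu> p (n - 1) * zpoly (p n) - eps \<mu> p n * zpoly (p (n - 1)))"
  have "zpoly W * Dz (zpoly (p (n - 1))) - (fls_const (acoef p n) * Theta \<mu> p W V (n - 1) * zpoly (p n)
           - (Omega \<mu> p W V n + zpoly V) * zpoly (p (n - 1)))
      = (zpoly W * Dz (zpoly (p (n - 1))) + zpoly V * zpoly (p (n - 1))) * (1 - C)
        + zpoly W * zpoly (p (n - 1)) * Dz C"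
    by (simp add: C_def Theta_def Omega_def algebra_simps)
  moreover have "C = 1"
    unfolding C_def by (rule eps_casorati[OF assms])
  ultimately show ?thesis
    by simp
qed

theorem p_differential_equation:
  assumes "W \<noteq> 0" and "n \<ge> 1"
  shows "zpoly W * Theta \<mu> p W V n * Dz (Dz (zpoly (p n))) =
           (zpoly W * Dz (Theta \<mu> p W V n) - Dz (zpoly W) * Theta \<mu> p W V n
              - 2 * zpoly V * Theta \<mu> p W V n) * Dz (zpoly (p n))
           + Kcoef \<mu> p W V n * zpoly (p n)"
  unfolding Kcoef_def Let_def
  by (rule Dz_ode_elimination[OF _ _ lowering_relation[OF assms(2)] raising_relation[OF assms(2)]])
     (simp_all add: assms(1))

end

lemma ladder_discriminant_dvd:
  fixes a u v w P P1 Q Q1 S T T1 :: "'a::comm_ring_1"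
  assumes "a * (Q * P1 - Q1 * P) = 1"
  shows "w dvd (a * (w * S - u * P * P1 - v * (Q1 * P + Q * P1)))\<^sup>2 - v\<^sup>2
           - a\<^sup>2 * (w * T - P * (u * P + 2 * v * Q)) * (w * T1 - P1 * (u * P1 + 2 * v * Q1))"
proof -
  define \<Omega>0 \<Theta>0 \<Theta>1 where "\<Omega>0 = u * P * P1 + v * (Q1 * P + Q * P1)"
    and "\<Theta>0 = P * (u * P + 2 * v * Q)" and "\<Theta>1 = P1 * (u * P1 + 2 * v * Q1)"
  have residue: "(a * \<Omega>0)\<^sup>2 - v\<^sup>2 - a\<^sup>2 * \<Theta>0 * \<Theta>1 = v\<^sup>2 * ((a * (Q * P1 - Q1 * P))\<^sup>2 - 1)"
    unfolding \<Omega>0_def \<Theta>0_def \<Theta>1_def by (simp add: algebra_simps power2_eq_square)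
  have "(a * (w * S - \<Omega>0))\<^sup>2 - v\<^sup>2 - a\<^sup>2 * (w * T - \<Theta>0) * (w * T1 - \<Theta>1)
      = (a * \<Omega>0)\<^sup>2 - v\<^sup>2 - a\<^sup>2 * \<Theta>0 * \<Theta>1
        + w * (a\<^sup>2 * (w * S\<^sup>2 - 2 * S * \<Omega>0 - w * T * T1 + T * \<Theta>1 + \<Theta>0 * T1))"
    by (simp add: algebra_simps power2_eq_square)
  also have "\<dots> = w * (a\<^sup>2 * (w * S\<^sup>2 - 2 * S * \<Omega>0 - w * T * T1 + T * \<Theta>1 + \<Theta>0 * T1))"
    unfolding residue assms by simp
  finally have "w dvd (a * (w * S - \<Omega>0))\<^sup>2 - v\<^sup>2 - a\<^sup>2 * (w * T - \<Theta>0) * (w * T1 - \<Theta>1)"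
    by (rule dvdI)
  then show ?thesis
    by (simp add: \<Omega>0_def \<Theta>0_def \<Theta>1_def diff_diff_eq)
qed

locale semiclassical_polys = orthonormal_polys +
  fixes W V U :: "complex poly"
  assumes W_nonzero: "W \<noteq> 0"
    and semiclassical: "zpoly W * Dz (fseries \<mu>) = 2 * zpoly V * fseries \<mu> + zpoly U"
begin

definition theta_poly :: "nat \<Rightarrow> complex poly" where
  "theta_poly m = W * (pderiv (q m) * p m - q m * pderiv (p m)) - p m * (U * p m + 2 * V * q m)"

definition omega_poly :: "nat \<Rightarrow> complex poly" where
  "omega_poly n = Polynomial.smult (acoef p n)
     (W * (pderiv (q n) * p (n - 1) - q (n - 1) * pderiv (p n))
      - U * p n * p (n - 1) - V * (q (n - 1) * p n + q n * p (n - 1)))"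

lemma Theta_eq_zpoly: "Theta \<mu> p W V m = zpoly (theta_poly m)"
proof -
  have "Theta \<mu> p W V m - zpoly (theta_poly m)
      = (zpoly (p m))\<^sup>2 * (2 * zpoly V * fseries \<mu> + zpoly U - zpoly W * Dz (fseries \<mu>))"
    by (simp add: Theta_def theta_poly_def eps_conv algebra_simps power2_eq_square)
  then show ?thesis
    by (simp add: semiclassical)
qed

lemma Omega_eq_zpoly: "Omega \<mu> p W V n = zpoly (omega_poly n)"
proof -
  have "Omega \<mu> p W V n - zpoly (omega_poly n)
      = fls_const (acoef p n) * zpoly (p n) * zpoly (p (n - 1))
        * (2 * zpoly V * fseries \<mu> + zpoly U - zpoly W * Dz (fseries \<mu>))"
    by (simp add: Omega_def omega_poly_def eps_conv algebra_simps)
  then show ?thesis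
    by (simp add: semiclassical)
qed

lemma W_dvd_discriminant:
  assumes "n \<ge> 1"
  shows "W dvd (omega_poly n)\<^sup>2 - V\<^sup>2 - [:acoef p n:]\<^sup>2 * theta_poly n * theta_poly (n - 1)"
proof -
  have "omega_poly n = [:acoef p n:] * (W * (pderiv (q n) * p (n - 1) - q (n - 1) * pderiv (p n))
      - U * p n * p (n - 1) - V * (q (n - 1) * p n + q n * p (n - 1)))"
    by (simp add: omega_poly_def)
  then show ?thesis
    unfolding theta_poly_def
    by (simp only:) (rule ladder_discriminant_dvd, use q_casorati[OF assms] in simp)
qed

lemma Kcoef_polynomial:
  assumes "n \<ge> 1"
  shows "\<exists>Q. Kcoef \<mu> p W V n = zpoly Q"
proof -
  obtain X where X: "(omega_poly n)\<^sup>2 - V\<^sup>2 - [:acoef p n:]\<^sup>2 * theta_poly n * theta_poly (n - 1) = W * X"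
    using W_dvd_discriminant[OF assms] by blast
  have "Theta \<mu> p W V n * ((Omega \<mu> p W V n)\<^sup>2 - (zpoly V)\<^sup>2
          - (fls_const (acoef p n))\<^sup>2 * Theta \<mu> p W V n * Theta \<mu> p W V (n - 1))
      = zpoly W * zpoly (theta_poly n * X)"
    using arg_cong[where f = "\<lambda>R. zpoly (theta_poly n * R)", OF X]
    by (simp add: Theta_eq_zpoly Omega_eq_zpoly ac_simps)
  then have quotient: "Theta \<mu> p W V n * ((Omega \<mu> p W V n)\<^sup>2 - (zpoly V)\<^sup>2
          - (fls_const (acoef p n))\<^sup>2 * Theta \<mu> p W V n * Theta \<mu> p W V (n - 1)) / zpoly W
      = zpoly (theta_poly n * X)"
    using W_nonzero by simp
  have "Kcoef \<mu> p W V n = Dz (Omega \<mu> p W V n - zpoly V) * Theta \<mu> p W V n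
      - (Omega \<mu> p W V n - zpoly V) * Dz (Theta \<mu> p W V n) + zpoly (theta_poly n * X)"
    unfolding Kcoef_def Let_def quotient ..
  also have "\<dots> = zpoly (pderiv (omega_poly n - V) * theta_poly n
      - (omega_poly n - V) * pderiv (theta_poly n) + theta_poly n * X)"
    by (simp add: Theta_eq_zpoly Omega_eq_zpoly pderiv_diff)
  finally show ?thesis ..
qed

end

theorem mainTheorem4:
  fixes \<mu> :: "nat \<Rightarrow> complex" and p :: "nat \<Rightarrow> complex poly"
    and W V U :: "complex poly" and n :: nat
  assumes hankel: "\<And>m. hankel_det \<mu> m \<noteq> 0"
    and deg: "\<And>m. degree (p m) = m \<and> lead_coeff (p m) \<noteq> 0"
    and orthonormal: "\<And>m k. Lfun \<mu> (p m * p k) = (if m = k then 1 else 0)"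
    and W_nz: "W \<noteq> 0"
    and semiclassical: "zpoly W * Dz (fseries \<mu>) = 2 * zpoly V * fseries \<mu> + zpoly U"
    and n: "n \<ge> 1"
  shows "(zpoly W * Theta \<mu> p W V n * Dz (Dz (zpoly (p n))) =
           (zpoly W * Dz (Theta \<mu> p W V n) - Dz (zpoly W) * Theta \<mu> p W V n
              - 2 * zpoly V * Theta \<mu> p W V n) * Dz (zpoly (p n))
           + Kcoef \<mu> p W V n * zpoly (p n))
         \<and> (\<exists>Q. Kcoef \<mu> p W V n = zpoly Q)"
proof -
  (* The Hankel condition only guarantees that an orthonormal family exists. *)
  interpret semiclassical_polys \<mu> p W V U
    using deg orthonormal W_nz semiclassical by unfold_locales blast+
  show ?thesis
    using p_differential_equation[OF W_nz n] Kcoef_polynomial[OF n] by blast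
qed

end
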